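(* Let $m,n\ge2$. If $f\in\operatorname{vert}(\Diamond_m,\Diamond_n)$ and $f(0)$ lies in the interior of $\Diamond_n$, then $f(0)=0$.
   Context: For convex polytopes $P,Q$, $\operatorname{Hom}(P,Q)$ is the set of maps $P\to Q$ that are restrictions of affine maps $\operatorname{Aff}(P)\to\operatorname{Aff}(Q)$; it is a convex polytope in the affine space of affine maps $\operatorname{Aff}(P)\to\operatorname{Aff}(Q)$, and $\operatorname{vert}(P,Q)$ denotes its set of vertices. $\Diamond_n=\operatorname{conv}(\pm e_1,\ldots,\pm e_n)\subset\mathbb{R}^n$ is the $n$-dimensional crosspolytope. *)

theory Defs
  imports "HOL-Analysis.Analysis"
begin

definition crosspolytope :: "(real^'n) set" where
  "crosspolytope = convex hull {x. \<exists>i. x = axis i 1 \<or> x = - axis i 1}"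

text \<open>An affine map R^m -> R^n is represented by the pair (A, b), meaning x |-> A *v x + b.
  This is a linear isomorphism between the space of affine maps and (real^'m^'n) * real^'n.\<close>
definition Hom :: "(real^'m) set \<Rightarrow> (real^'n) set \<Rightarrow> ((real^'m^'n) \<times> (real^'n)) set" where
  "Hom P Q = {(A, b). \<forall>x\<in>P. A *v x + b \<in> Q}"

definition vert :: "(real^'m) set \<Rightarrow> (real^'n) set \<Rightarrow> ((real^'m^'n) \<times> (real^'n)) set" where
  "vert P Q = {f. f extreme_point_of Hom P Q}"

end

theory Submission
  imports Defs
begin

(* An affine map f = (A, b) on the crosspolytope is determined by the images
   P_k = f(e_k) and Q_k = f(-e_k); it lies in Hom exactly when all of them have
   l1 norm at most 1, and P_k + Q_k = 2 f(0) for every k.  If f(0) is interior,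
   each pair (P_k, Q_k) can be moved inside the l1 ball so that its sum becomes
   2 (1 + t) f(0) for all small |t|: either one point is interior, or the two
   points have a coordinate of opposite signs and slide along their facets.
   Hence f +- e (D, f(0)) lie in Hom for some matrix D and e > 0, and f is not
   extreme unless f(0) = 0. *)

definition l1_norm :: "real^'n \<Rightarrow> real" where
  "l1_norm x = (\<Sum>i\<in>UNIV. \<bar>x$i\<bar>)"

lemma l1_norm_nonneg: "0 \<le> l1_norm x"
  unfolding l1_norm_def by (simp add: sum_nonneg)

lemma l1_norm_scaleR: "l1_norm (c *\<^sub>R x) = \<bar>c\<bar> * l1_norm x"
  unfolding l1_norm_def by (simp add: sum_distrib_left abs_mult)

lemma l1_norm_triangle: "l1_norm (x + y) \<le> l1_norm x + l1_norm y"
  unfolding l1_norm_def sum.distrib[symmetric] by (rule sum_mono) (simp add: abs_triangle_ineq)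

lemma abs_component_le_l1_norm: "\<bar>x$i\<bar> \<le> l1_norm x"
  unfolding l1_norm_def by (rule member_le_sum) auto

lemma l1_norm_add_axis: "l1_norm (x + c *\<^sub>R axis k 1) = l1_norm x - \<bar>x$k\<bar> + \<bar>x$k + c\<bar>"
proof -
  have "(\<Sum>j\<in>UNIV-{k}. \<bar>(x + c *\<^sub>R axis k 1)$j\<bar>) = (\<Sum>j\<in>UNIV-{k}. \<bar>x$j\<bar>)"
    by (rule sum.cong) (auto simp: axis_def)
  then show ?thesis
    unfolding l1_norm_def by (simp add: sum.remove[of UNIV k])
qed

lemma l1_norm_axis: "l1_norm (axis k c) = \<bar>c\<bar>"
proof -
  have "\<bar>axis k c $ i\<bar> = (if i = k then \<bar>c\<bar> else 0)" for i
    by (simp add: axis_def)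
  then show ?thesis
    by (simp add: l1_norm_def)
qed

lemma l1_norm_minus: "l1_norm (- x) = l1_norm x"
  by (simp add: l1_norm_def)

lemma l1_norm_add_eq:
  assumes "\<And>j. 0 \<le> x$j * y$j"
  shows "l1_norm (x + y) = l1_norm x + l1_norm y"
proof -
  have "\<bar>x$j + y$j\<bar> = \<bar>x$j\<bar> + \<bar>y$j\<bar>" for j
    using assms[of j] by (simp add: zero_le_mult_iff) arith
  then show ?thesis
    unfolding l1_norm_def sum.distrib[symmetric] by simp
qed

lemma convex_l1_ball: "convex {x :: real^'n. l1_norm x \<le> 1}"
proof (rule convexI)
  fix x y :: "real^'n" and u v :: real
  assume "x \<in> {x. l1_norm x \<le> 1}" "y \<in> {x. l1_norm x \<le> 1}" "0 \<le> u" "0 \<le> v" "u + v = 1"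
  then have "l1_norm (u *\<^sub>R x + v *\<^sub>R y) \<le> u * l1_norm x + v * l1_norm y"
    using l1_norm_triangle[of "u *\<^sub>R x" "v *\<^sub>R y"] by (simp add: l1_norm_scaleR)
  also have "\<dots> \<le> u + v"
    using \<open>x \<in> _\<close> \<open>y \<in> _\<close> \<open>0 \<le> u\<close> \<open>0 \<le> v\<close>
    by (intro add_mono mult_right_le_one_le) (auto simp: l1_norm_nonneg)
  finally show "u *\<^sub>R x + v *\<^sub>R y \<in> {x. l1_norm x \<le> 1}"
    using \<open>u + v = 1\<close> by simp
qed

lemma convex_sum_le_one:
  fixes C :: "'a::real_vector set"
  assumes "finite S" "convex C" "0 \<in> C"
    and "sum a S \<le> 1" "\<And>i. i \<in> S \<Longrightarrow> 0 \<le> a i" "\<And>i. i \<in> S \<Longrightarrow> y i \<in> C"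
  shows "(\<Sum>i\<in>S. a i *\<^sub>R y i) \<in> C"
proof (cases "sum a S = 0")
  case True
  then have "\<forall>i\<in>S. a i = 0"
    using assms by (simp add: sum_nonneg_eq_0_iff)
  then show ?thesis
    using \<open>0 \<in> C\<close> by simp
next
  case False
  let ?s = "sum a S"
  have "?s > 0"
    using False assms(5) by (simp add: sum_nonneg order_less_le)
  have "(\<Sum>i\<in>S. (a i / ?s) *\<^sub>R y i) \<in> C"
    using \<open>?s > 0\<close> assms
    by (intro convex_sum) (auto simp: sum_divide_distrib[symmetric])
  then have "?s *\<^sub>R (\<Sum>i\<in>S. (a i / ?s) *\<^sub>R y i) + (1 - ?s) *\<^sub>R 0 \<in> C"
    using \<open>?s > 0\<close> assms by (intro convexD) auto
  then show ?thesis
    using \<open>?s > 0\<close> by (simp add: scaleR_sum_right)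
qed

lemma axis_in_crosspolytope: "axis k 1 \<in> crosspolytope" "- axis k 1 \<in> crosspolytope"
  unfolding crosspolytope_def by (auto intro!: hull_inc)

lemma zero_in_crosspolytope: "(0 :: real^'n) \<in> crosspolytope"
proof -
  have "(1/2) *\<^sub>R axis k 1 + (1/2) *\<^sub>R (- axis k 1) \<in> (crosspolytope :: (real^'n) set)" for k :: 'n
    using axis_in_crosspolytope unfolding crosspolytope_def by (intro convexD) auto
  then show ?thesis
    by simp
qed

lemma crosspolytope_eq_l1_ball: "crosspolytope = {x :: real^'n. l1_norm x \<le> 1}"
proof
  show "crosspolytope \<subseteq> {x :: real^'n. l1_norm x \<le> 1}"
    unfolding crosspolytope_def
    by (rule hull_minimal) (auto simp: convex_l1_ball l1_norm_axis l1_norm_minus)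
next
  show "{x :: real^'n. l1_norm x \<le> 1} \<subseteq> crosspolytope"
  proof
    fix y :: "real^'n"
    assume "y \<in> {x. l1_norm x \<le> 1}"
    define z :: "'n \<Rightarrow> real^'n" where "z j = (if 0 \<le> y$j then axis j 1 else - axis j 1)" for j
    have "(\<bar>y$j\<bar> *\<^sub>R z j) $ i = (if j = i then y$i else 0)" for i j
      by (auto simp: z_def axis_def)
    then have "y = (\<Sum>j\<in>UNIV. \<bar>y$j\<bar> *\<^sub>R z j)"
      by (simp add: vec_eq_iff sum_component)
    also have "\<dots> \<in> crosspolytope"
      using \<open>y \<in> _\<close>
      by (intro convex_sum_le_one)
        (auto simp: crosspolytope_def l1_norm_def z_def zero_in_crosspolytope[unfolded crosspolytope_def]
          intro: axis_in_crosspolytope[unfolded crosspolytope_def])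
    finally show "y \<in> crosspolytope" .
  qed
qed

lemma l1_norm_less_one_if_interior_crosspolytope:
  fixes x :: "real^'n"
  assumes "x \<in> interior crosspolytope"
  shows "l1_norm x < 1"
proof -
  obtain e where "e > 0" and e: "cball x e \<subseteq> crosspolytope"
    using assms mem_interior_cball by blast
  fix k :: 'n
  define \<sigma> :: real where "\<sigma> = (if 0 \<le> x$k then 1 else -1)"
  have "x + (\<sigma> * e) *\<^sub>R axis k 1 \<in> crosspolytope"
    using e \<open>e > 0\<close> by (intro subsetD[OF e]) (simp add: dist_norm \<sigma>_def)
  moreover have "l1_norm (x + (\<sigma> * e) *\<^sub>R axis k 1) = l1_norm x + e"
    using \<open>e > 0\<close> by (simp add: l1_norm_add_axis \<sigma>_def)
  ultimately show ?thesis
    using \<open>e > 0\<close> by (simp add: crosspolytope_eq_l1_ball)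
qed

lemma Hom_convex_hull:
  fixes A :: "real^'m^'n"
  assumes "convex Q"
  shows "(A, b) \<in> Hom (convex hull S) Q \<longleftrightarrow> (\<forall>x\<in>S. A *v x + b \<in> Q)"
proof
  assume "\<forall>x\<in>S. A *v x + b \<in> Q"
  moreover have "convex {x. A *v x + b \<in> Q}"
  proof -
    have "{x. A *v x + b \<in> Q} = (\<lambda>x. A *v x) -` ((+) (- b) ` Q)"
      by (force simp: algebra_simps)
    then show ?thesis
      using assms by (simp add: convex_linear_vimage convex_translation)
  qed
  ultimately have "convex hull S \<subseteq> {x. A *v x + b \<in> Q}"
    by (intro hull_minimal) auto
  then show "(A, b) \<in> Hom (convex hull S) Q"
    by (auto simp: Hom_def)
qed (auto simp: Hom_def hull_inc)

lemma Hom_crosspolytope_iff: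
  fixes A :: "real^'m^'n"
  shows "(A, b) \<in> Hom crosspolytope crosspolytope \<longleftrightarrow>
    (\<forall>k. l1_norm (A *v axis k 1 + b) \<le> 1 \<and> l1_norm (b - A *v axis k 1) \<le> 1)"
  unfolding crosspolytope_def[where 'n = 'm]
  by (subst Hom_convex_hull)
    (auto simp: crosspolytope_eq_l1_ball convex_l1_ball vec.neg)

lemma l1_norm_add_scaled_le:
  assumes "l1_norm w \<le> 2" and "\<bar>t\<bar> \<le> (1 - l1_norm p) / 2"
  shows "l1_norm (p + t *\<^sub>R w) \<le> 1"
proof -
  have "l1_norm (p + t *\<^sub>R w) \<le> l1_norm p + \<bar>t\<bar> * l1_norm w"
    using l1_norm_triangle[of p "t *\<^sub>R w"] by (simp add: l1_norm_scaleR)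
  also have "\<dots> \<le> l1_norm p + \<bar>t\<bar> * 2"
    using assms(1) by (simp add: mult_left_mono)
  finally show ?thesis
    using assms(2) by (simp add: field_simps)
qed

lemma l1_norm_tilt_to_axis:
  assumes "l1_norm x \<le> 1" and "x$j \<noteq> 0" and "\<bar>t\<bar> \<le> \<bar>x$j\<bar>"
  shows "l1_norm ((1 + t) *\<^sub>R x - (t * sgn (x$j)) *\<^sub>R axis j 1) \<le> 1"
proof -
  have "\<bar>x$j\<bar> \<le> 1"
    using abs_component_le_l1_norm[of x j] assms(1) by linarith
  then have "0 \<le> 1 + t"
    using assms(3) by linarith
  have "0 \<le> (1 + t) * \<bar>x$j\<bar> - t"
  proof (cases "t \<le> 0")
    case False
    then have "0 \<le> t * \<bar>x$j\<bar>"
      by simp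
    then show ?thesis
      using assms(3) by (simp add: algebra_simps)
  qed (use \<open>0 \<le> 1 + t\<close> mult_nonneg_nonneg[of "1 + t" "\<bar>x$j\<bar>"] in linarith)
  moreover have "(1 + t) * x$j - t * sgn (x$j) = sgn (x$j) * ((1 + t) * \<bar>x$j\<bar> - t)"
    using assms(2) by (auto simp: sgn_if algebra_simps)
  ultimately have "\<bar>(1 + t) * x$j - t * sgn (x$j)\<bar> = (1 + t) * \<bar>x$j\<bar> - t"
    using assms(2) by (simp add: abs_mult abs_sgn_eq)
  moreover have "l1_norm ((1 + t) *\<^sub>R x - (t * sgn (x$j)) *\<^sub>R axis j 1)
      = l1_norm ((1 + t) *\<^sub>R x) - \<bar>(1 + t) * x$j\<bar> + \<bar>(1 + t) * x$j - t * sgn (x$j)\<bar>"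
    using l1_norm_add_axis[of "(1 + t) *\<^sub>R x" "- (t * sgn (x$j))" j] by simp
  ultimately have "l1_norm ((1 + t) *\<^sub>R x - (t * sgn (x$j)) *\<^sub>R axis j 1) = (1 + t) * l1_norm x - t"
    using \<open>0 \<le> 1 + t\<close> by (simp add: l1_norm_scaleR abs_mult)
  also have "\<dots> \<le> 1"
    using assms(1) \<open>0 \<le> 1 + t\<close> mult_left_mono[of "l1_norm x" 1 "1 + t"] by simp
  finally show ?thesis .
qed

lemma l1_ball_pair_stretch:
  fixes p q :: "real^'n"
  assumes "l1_norm p \<le> 1" and "l1_norm q \<le> 1" and "l1_norm (p + q) < 2"
  shows "\<exists>u w e. 0 < e \<and> u + w = p + q \<and>
    (\<forall>t. \<bar>t\<bar> \<le> e \<longrightarrow> l1_norm (p + t *\<^sub>R u) \<le> 1 \<and> l1_norm (q + t *\<^sub>R w) \<le> 1)"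
proof -
  consider "l1_norm p < 1" | "l1_norm q < 1" | j where "p$j * q$j < 0"
  proof (rule ccontr)
    assume "\<not> thesis"
    then have "\<not> l1_norm p < 1" "\<not> l1_norm q < 1" "\<forall>j. \<not> p$j * q$j < 0"
      using that by blast+
    moreover from this(3) have "l1_norm (p + q) = l1_norm p + l1_norm q"
      by (intro l1_norm_add_eq) (simp add: not_less)
    ultimately show False
      using assms(3) by linarith
  qed
  then show ?thesis
  proof cases
    case 1
    then show ?thesis
      using assms l1_norm_add_scaled_le[of "p + q" _ p]
      by (intro exI[of _ "p + q"] exI[of _ 0] exI[of _ "(1 - l1_norm p) / 2"]) auto
  next
    case 2
    then show ?thesis
      using assms l1_norm_add_scaled_le[of "p + q" _ q]
      by (intro exI[of _ 0] exI[of _ "p + q"] exI[of _ "(1 - l1_norm q) / 2"]) auto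
  next
    case (3 j)
    define \<sigma> where "\<sigma> = sgn (p$j)"
    have "p$j \<noteq> 0" "q$j \<noteq> 0" "sgn (q$j) = - \<sigma>"
      using 3 by (auto simp: \<sigma>_def mult_less_0_iff)
    \<comment> \<open>Both points slide along their facets of the ball, in opposite directions along \<open>axis j\<close>.\<close>
    have "l1_norm (p + t *\<^sub>R (p - \<sigma> *\<^sub>R axis j 1)) \<le> 1 \<and> l1_norm (q + t *\<^sub>R (q + \<sigma> *\<^sub>R axis j 1)) \<le> 1"
      if "\<bar>t\<bar> \<le> min \<bar>p$j\<bar> \<bar>q$j\<bar>" for t
      using l1_norm_tilt_to_axis[of p j t] l1_norm_tilt_to_axis[of q j t] that assms
        \<open>p$j \<noteq> 0\<close> \<open>q$j \<noteq> 0\<close> \<open>sgn (q$j) = - \<sigma>\<close>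
      by (simp add: \<sigma>_def algebra_simps)
    then show ?thesis
      using \<open>p$j \<noteq> 0\<close> \<open>q$j \<noteq> 0\<close>
      by (intro exI[of _ "p - \<sigma> *\<^sub>R axis j 1"] exI[of _ "q + \<sigma> *\<^sub>R axis j 1"]
          exI[of _ "min \<bar>p$j\<bar> \<bar>q$j\<bar>"]) auto
  qed
qed

lemma Hom_crosspolytope_stretch:
  fixes A :: "real^'m^'n" and b :: "real^'n"
  assumes "(A, b) \<in> Hom crosspolytope crosspolytope" and "l1_norm b < 1"
  shows "\<exists>D e. 0 < e \<and>
    (\<forall>t. \<bar>t\<bar> \<le> e \<longrightarrow> (A + t *\<^sub>R D, (1 + t) *\<^sub>R b) \<in> Hom crosspolytope crosspolytope)"
proof -
  define P where "P k = A *v axis k 1 + b" for k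
  define Q where "Q k = b - A *v axis k 1" for k
  have "P k + Q k = 2 *\<^sub>R b" for k
    by (simp add: P_def Q_def scaleR_2)
  then have "\<exists>u w e. 0 < e \<and> u + w = 2 *\<^sub>R b \<and>
      (\<forall>t. \<bar>t\<bar> \<le> e \<longrightarrow> l1_norm (P k + t *\<^sub>R u) \<le> 1 \<and> l1_norm (Q k + t *\<^sub>R w) \<le> 1)" for k
    using assms l1_ball_pair_stretch[of "P k" "Q k"]
    by (simp add: Hom_crosspolytope_iff P_def Q_def l1_norm_scaleR)
  then obtain U W E where UW: "\<And>k. 0 < E k" "\<And>k. U k + W k = 2 *\<^sub>R b"
    and E: "\<And>k t. \<bar>t\<bar> \<le> E k \<Longrightarrow> l1_norm (P k + t *\<^sub>R U k) \<le> 1 \<and> l1_norm (Q k + t *\<^sub>R W k) \<le> 1"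
    by metis
  define D :: "real^'m^'n" where "D = (\<chi> i k. (U k - b)$i)"
  have D: "D *v axis k 1 = U k - b" for k
    by (simp add: matrix_vector_mult_basis column_def D_def vec_eq_iff)
  define e where "e = Min (range E)"
  have "0 < e"
    using UW(1) by (simp add: e_def)
  moreover have "(A + t *\<^sub>R D, (1 + t) *\<^sub>R b) \<in> Hom crosspolytope crosspolytope"
    if "\<bar>t\<bar> \<le> e" for t
  proof -
    have "\<bar>t\<bar> \<le> E k" for k
      using that Min_le[of "range E" "E k"] by (simp add: e_def)
    moreover have "(A + t *\<^sub>R D) *v axis k 1 + (1 + t) *\<^sub>R b = P k + t *\<^sub>R U k"
      and "(1 + t) *\<^sub>R b - (A + t *\<^sub>R D) *v axis k 1 = Q k + t *\<^sub>R W k" for k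
    proof -
      have AD: "(A + t *\<^sub>R D) *v axis k 1 = A *v axis k 1 + t *\<^sub>R (U k - b)"
        by (simp add: matrix_vector_mult_add_rdistrib D flip: scaleR_matrix_vector_assoc)
      have W: "W k = 2 *\<^sub>R b - U k"
        using UW(2)[of k] by (metis add_diff_cancel_left')
      show "(A + t *\<^sub>R D) *v axis k 1 + (1 + t) *\<^sub>R b = P k + t *\<^sub>R U k"
        unfolding AD P_def by (simp add: algebra_simps)
      show "(1 + t) *\<^sub>R b - (A + t *\<^sub>R D) *v axis k 1 = Q k + t *\<^sub>R W k"
        unfolding AD W Q_def by (simp add: algebra_simps scaleR_2)
    qed
    ultimately show ?thesis
      using E by (simp add: Hom_crosspolytope_iff)
  qed
  ultimately show ?thesis
    by blast
qed

lemma not_extreme_point_of_segment_midpoint: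
  assumes "x - d \<in> S" and "x + d \<in> S" and "d \<noteq> 0"
  shows "\<not> x extreme_point_of S"
proof -
  have "midpoint (x - d) (x + d) = x"
    by (simp add: midpoint_def scaleR_2 flip: scaleR_add_right)
  moreover have "x - d \<noteq> x + d"
  proof
    assume "x - d = x + d"
    then have "2 *\<^sub>R d = 0"
      by (simp add: scaleR_2 algebra_simps)
    then show False
      using assms(3) by simp
  qed
  ultimately have "x \<in> open_segment (x - d) (x + d)"
    using midpoint_in_open_segment by metis
  then show ?thesis
    using assms(1,2) by (auto simp: extreme_point_of_def)
qed

theorem theorem6p1:
  fixes A :: "real^'m^'n" and b :: "real^'n"
  assumes "CARD('m) \<ge> 2" and "CARD('n) \<ge> 2"
    and "(A, b) \<in> vert (crosspolytope :: (real^'m) set) (crosspolytope :: (real^'n) set)"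
    and "A *v 0 + b \<in> interior (crosspolytope :: (real^'n) set)"
  shows "A *v 0 + b = 0"
proof (rule ccontr)
  assume "A *v 0 + b \<noteq> 0"
  then have "b \<noteq> 0"
    by simp
  have extreme: "(A, b) extreme_point_of Hom crosspolytope crosspolytope"
    using assms(3) by (simp add: vert_def)
  then have "(A, b) \<in> Hom crosspolytope crosspolytope"
    by (simp add: extreme_point_of_def)
  moreover have "l1_norm b < 1"
    using assms(4) l1_norm_less_one_if_interior_crosspolytope by simp
  ultimately obtain D e where "0 < e"
    and segment: "\<And>t. \<bar>t\<bar> \<le> e \<Longrightarrow> (A + t *\<^sub>R D, (1 + t) *\<^sub>R b) \<in> Hom crosspolytope crosspolytope"
    by (metis Hom_crosspolytope_stretch)
  have "(A, b) - e *\<^sub>R (D, b) = (A + (- e) *\<^sub>R D, (1 + - e) *\<^sub>R b)"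
    and "(A, b) + e *\<^sub>R (D, b) = (A + e *\<^sub>R D, (1 + e) *\<^sub>R b)"
    by (simp_all add: algebra_simps)
  then have "(A, b) - e *\<^sub>R (D, b) \<in> Hom crosspolytope crosspolytope"
    and "(A, b) + e *\<^sub>R (D, b) \<in> Hom crosspolytope crosspolytope"
    using segment[of "- e"] segment[of e] \<open>0 < e\<close> by simp_all
  moreover have "e *\<^sub>R (D, b) \<noteq> 0"
    using \<open>0 < e\<close> \<open>b \<noteq> 0\<close> by (simp add: zero_prod_def)
  ultimately show False
    using extreme not_extreme_point_of_segment_midpoint[of "(A, b)" "e *\<^sub>R (D, b)"] by blast
qed

end
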